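(* Let $A$ be a torsion-free abelian group and $p$ a prime. Then $A$ has a homomorphic image isomorphic to $\bigoplus_{\aleph_0}\mathbb{Z}(p^\infty)$ (a direct sum of countably infinitely many copies of $\mathbb{Z}(p^\infty)$) if and only if $A$ has infinite (torsion-free) rank.
   Context: All groups are abelian; $\mathbb{Z}(p^\infty)$ is the quasi-cyclic $p$-group. *)

theory Defs
  imports "HOL-Algebra.Algebra"
begin

text \<open>The quasi-cyclic (Pruefer) p-group Z(p^infinity), realised as the
  p-power-denominator rationals in [0,1) under addition modulo 1.\<close>
definition Zp_inf :: "nat \<Rightarrow> rat monoid" where
  "Zp_inf p = \<lparr> carrier = {q. 0 \<le> q \<and> q < 1 \<and>
                  (\<exists>(k::nat) (a::int). q = of_int a / of_nat p ^ k)},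
               monoid.mult = (\<lambda>x y. x + y - of_int (floor (x + y))),
               monoid.one = 0 \<rparr>"

definition Zp_inf_sum :: "nat \<Rightarrow> (nat \<Rightarrow> rat) monoid" where
  "Zp_inf_sum p = sum_group (UNIV :: nat set) (\<lambda>_. Zp_inf p)"

definition torsion_free :: "('a, 'b) monoid_scheme \<Rightarrow> bool" where
  "torsion_free G \<longleftrightarrow> (\<forall>x \<in> carrier G. \<forall>n::nat. n > 0 \<and> x [^]\<^bsub>G\<^esub> n = \<one>\<^bsub>G\<^esub> \<longrightarrow> x = \<one>\<^bsub>G\<^esub>)"

text \<open>Linear independence over the integers (written multiplicatively).\<close>
definition ab_independent :: "('a, 'b) monoid_scheme \<Rightarrow> 'a set \<Rightarrow> bool" where
  "ab_independent G S \<longleftrightarrow> S \<subseteq> carrier G \<and>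
     (\<forall>F c. F \<subseteq> S \<and> finite F \<and>
        finprod G (\<lambda>x. x [^]\<^bsub>G\<^esub> (c x :: int)) F = \<one>\<^bsub>G\<^esub> \<longrightarrow> (\<forall>x\<in>F. c x = 0))"

text \<open>Infinite (torsion-free) rank: there is an infinite independent subset
  (equivalently, maximal independent subsets are infinite).\<close>
definition infinite_rank :: "('a, 'b) monoid_scheme \<Rightarrow> bool" where
  "infinite_rank G \<longleftrightarrow> (\<exists>S. infinite S \<and> ab_independent G S)"

end

theory Submission
  imports Defs
begin

text \<open>
  If the torsion-free group \<open>A\<close> contains an infinite independent set \<open>s\<^sub>0, s\<^sub>1, \<dots>\<close>,
  enumerate the countable group \<open>D = \<Oplus>\<^sub>\<aleph>\<^sub>0 \<int>(p\<^sup>\<infinity>)\<close> as \<open>d\<^sub>0, d\<^sub>1, \<dots>\<close>.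
  Independence lets us send each \<open>s\<^sub>i\<close> to \<open>d\<^sub>i\<close>, which defines a homomorphism on the
  subgroup generated by the \<open>s\<^sub>i\<close>; since \<open>D\<close> is divisible, Zorn's lemma extends it to
  all of \<open>A\<close>, and the extension is onto. Conversely, given an epimorphism \<open>A \<rightarrow> D\<close>, lift
  the elements \<open>1/p\<close> of the different coordinates to \<open>x\<^sub>0, x\<^sub>1, \<dots>\<close>. Projecting a
  relation \<open>\<Sum> c\<^sub>i x\<^sub>i = 0\<close> to coordinate \<open>j\<close> shows \<open>p dvd c\<^sub>j\<close>; as \<open>A\<close> is
  torsion-free, the relation can be divided by \<open>p\<close>, so every \<open>c\<^sub>j\<close> is divisible by all
  powers of \<open>p\<close> and vanishes.
\<close>

lemma normal_quotient_iso_iff_surj_hom: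
  assumes "group G" "group H"
  shows "(\<exists>N. N \<lhd> G \<and> G Mod N \<cong> H) \<longleftrightarrow> (\<exists>h\<in>hom G H. h ` carrier G = carrier H)"
proof
  assume "\<exists>N. N \<lhd> G \<and> G Mod N \<cong> H"
  then obtain N \<phi> where N: "N \<lhd> G" and \<phi>: "\<phi> \<in> iso (G Mod N) H"
    unfolding is_iso_def by blast
  have cosets: "r_coset G N ` carrier G = carrier (G Mod N)"
    by (auto simp: FactGroup_def RCOSETS_def)
  have "\<phi> \<circ> r_coset G N \<in> hom G H"
    by (rule hom_compose[OF normal.r_coset_hom_Mod[OF N]]) (use \<phi> in \<open>simp add: iso_def\<close>)
  moreover have "(\<phi> \<circ> r_coset G N) ` carrier G = carrier H"
    unfolding image_comp[symmetric] cosets using \<phi> by (simp add: iso_def bij_betw_def)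
  ultimately show "\<exists>h\<in>hom G H. h ` carrier G = carrier H" by blast
next
  assume "\<exists>h\<in>hom G H. h ` carrier G = carrier H"
  then obtain h where h: "h \<in> hom G H" and surj: "h ` carrier G = carrier H" by blast
  then interpret group_hom G H h using assms by (simp add: group_hom_def group_hom_axioms_def)
  show "\<exists>N. N \<lhd> G \<and> G Mod N \<cong> H" using normal_kernel FactGroup_iso[OF surj] by blast
qed

section \<open>The quasi-cyclic group as \<open>p\<close>-adic fractions modulo 1\<close>

lemma frac_frac_add: "frac (frac x + y) = frac (x + (y::rat))"
proof -
  have "frac x + y = (x + y) + of_int (- \<lfloor>x\<rfloor>)" by (simp add: frac_def)
  then show ?thesis by (simp only: frac_add_of_int_right)
qed

lemma frac_of_nat_mult_frac: "frac (of_nat n * frac y) = frac (of_nat n * (y::rat))"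
proof -
  have "of_nat n * frac y = of_nat n * y + of_int (- int n * \<lfloor>y\<rfloor>)"
    by (simp add: frac_def algebra_simps)
  then show ?thesis by (simp only: frac_add_of_int_right)
qed

lemma of_int_divide_in_Ints_iff:
  assumes "p > 0"
  shows "(of_int c / of_nat p :: rat) \<in> \<int> \<longleftrightarrow> int p dvd c"
proof
  assume "(of_int c / of_nat p :: rat) \<in> \<int>"
  then obtain m where "of_int c / of_nat p = (of_int m :: rat)" by (elim Ints_cases)
  then have "(of_int c :: rat) = of_int (int p * m)" using assms by (simp add: field_simps)
  then show "int p dvd c" by (simp only: of_int_eq_iff dvd_triv_left)
next
  assume "int p dvd c"
  then obtain m where "c = int p * m" by blast
  then have "(of_int c / of_nat p :: rat) = of_int m" using assms by simp
  then show "(of_int c / of_nat p :: rat) \<in> \<int>" by simp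
qed

definition padic_fractions :: "nat \<Rightarrow> rat set" where
  "padic_fractions p = {q. \<exists>(k::nat) (a::int). q = of_int a / of_nat p ^ k}"

lemma of_int_in_padic_fractions: "p > 0 \<Longrightarrow> of_int m \<in> padic_fractions p"
  unfolding padic_fractions_def by (intro CollectI exI[of _ 0] exI[of _ m]) simp

lemma add_in_padic_fractions:
  assumes "p > 0" "x \<in> padic_fractions p" "y \<in> padic_fractions p"
  shows "x + y \<in> padic_fractions p"
proof -
  from assms obtain k a l b where x: "x = of_int a / of_nat p ^ k" and y: "y = of_int b / of_nat p ^ l"
    unfolding padic_fractions_def by auto
  have "x + y = of_int (a * p ^ l + b * p ^ k) / of_nat p ^ (k + l)"
    using assms(1) by (simp add: x y field_simps power_add)
  then show ?thesis unfolding padic_fractions_def by blast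
qed

lemma of_int_mult_in_padic_fractions:
  assumes "x \<in> padic_fractions p"
  shows "of_int m * x \<in> padic_fractions p"
proof -
  from assms obtain k a where "x = of_int a / of_nat p ^ k" unfolding padic_fractions_def by auto
  then have "of_int m * x = of_int (m * a) / of_nat p ^ k" by simp
  then show ?thesis unfolding padic_fractions_def by blast
qed

lemma frac_in_padic_fractions:
  assumes "p > 0" "x \<in> padic_fractions p"
  shows "frac x \<in> padic_fractions p"
proof -
  have "frac x = x + of_int (- \<lfloor>x\<rfloor>)" by (simp add: frac_def)
  then show ?thesis using add_in_padic_fractions[OF assms of_int_in_padic_fractions[OF assms(1)]] by metis
qed

lemma carrier_Zp_inf: "carrier (Zp_inf p) = {q \<in> padic_fractions p. 0 \<le> q \<and> q < 1}"
  unfolding Zp_inf_def padic_fractions_def by auto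

lemma mult_Zp_inf: "x \<otimes>\<^bsub>Zp_inf p\<^esub> y = frac (x + y)"
  unfolding Zp_inf_def by (simp add: frac_def)

lemma one_Zp_inf: "\<one>\<^bsub>Zp_inf p\<^esub> = 0"
  unfolding Zp_inf_def by simp

lemma frac_in_carrier_Zp_inf: "p > 0 \<Longrightarrow> x \<in> padic_fractions p \<Longrightarrow> frac x \<in> carrier (Zp_inf p)"
  unfolding carrier_Zp_inf using frac_in_padic_fractions frac_lt_1 frac_ge_0 by auto

lemma frac_of_int_mult_in_carrier_Zp_inf:
  "p > 0 \<Longrightarrow> x \<in> carrier (Zp_inf p) \<Longrightarrow> frac (of_int m * x) \<in> carrier (Zp_inf p)"
  by (intro frac_in_carrier_Zp_inf of_int_mult_in_padic_fractions) (auto simp: carrier_Zp_inf)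

lemma comm_group_Zp_inf:
  assumes "p > 0"
  shows "comm_group (Zp_inf p)"
proof (rule group.group_comm_groupI)
  have neg: "frac (- x) \<in> carrier (Zp_inf p)" if "x \<in> carrier (Zp_inf p)" for x
    using frac_of_int_mult_in_carrier_Zp_inf[OF assms that, of "-1"] by simp
  show "group (Zp_inf p)"
  proof (rule groupI)
    fix x y assume "x \<in> carrier (Zp_inf p)" "y \<in> carrier (Zp_inf p)"
    then show "x \<otimes>\<^bsub>Zp_inf p\<^esub> y \<in> carrier (Zp_inf p)"
      unfolding mult_Zp_inf using assms
      by (intro frac_in_carrier_Zp_inf add_in_padic_fractions) (auto simp: carrier_Zp_inf)
  next
    show "\<one>\<^bsub>Zp_inf p\<^esub> \<in> carrier (Zp_inf p)"
      using of_int_in_padic_fractions[OF assms, of 0] by (simp add: one_Zp_inf carrier_Zp_inf)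
  next
    fix x y z
    show "x \<otimes>\<^bsub>Zp_inf p\<^esub> y \<otimes>\<^bsub>Zp_inf p\<^esub> z = x \<otimes>\<^bsub>Zp_inf p\<^esub> (y \<otimes>\<^bsub>Zp_inf p\<^esub> z)"
      unfolding mult_Zp_inf by (metis frac_frac_add add.commute add.assoc)
  next
    fix x assume "x \<in> carrier (Zp_inf p)"
    then show "\<one>\<^bsub>Zp_inf p\<^esub> \<otimes>\<^bsub>Zp_inf p\<^esub> x = x"
      unfolding mult_Zp_inf one_Zp_inf by (simp add: carrier_Zp_inf frac_eq)
  next
    fix x assume "x \<in> carrier (Zp_inf p)"
    then show "\<exists>y\<in>carrier (Zp_inf p). y \<otimes>\<^bsub>Zp_inf p\<^esub> x = \<one>\<^bsub>Zp_inf p\<^esub>"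
      using neg by (intro bexI[of _ "frac (- x)"]) (simp_all add: mult_Zp_inf one_Zp_inf frac_frac_add)
  qed
next
  fix x y
  show "x \<otimes>\<^bsub>Zp_inf p\<^esub> y = y \<otimes>\<^bsub>Zp_inf p\<^esub> x" unfolding mult_Zp_inf by (simp add: add.commute)
qed

lemma inv_Zp_inf:
  assumes "p > 0" "x \<in> carrier (Zp_inf p)"
  shows "inv\<^bsub>Zp_inf p\<^esub> x = frac (- x)"
proof (rule group.inv_equality)
  show "group (Zp_inf p)" using comm_group_Zp_inf[OF assms(1)] comm_group.axioms(2) by blast
  show "frac (- x) \<otimes>\<^bsub>Zp_inf p\<^esub> x = \<one>\<^bsub>Zp_inf p\<^esub>"
    unfolding mult_Zp_inf one_Zp_inf by (simp add: frac_frac_add)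
  show "frac (- x) \<in> carrier (Zp_inf p)"
    using frac_of_int_mult_in_carrier_Zp_inf[OF assms, of "-1"] by simp
qed (rule assms(2))

lemma nat_pow_Zp_inf: "x [^]\<^bsub>Zp_inf p\<^esub> (n::nat) = frac (of_nat n * x)"
proof (induction n)
  case 0
  then show ?case by (simp add: one_Zp_inf)
next
  case (Suc n)
  then show ?case by (simp add: mult_Zp_inf frac_frac_add distrib_right add.commute)
qed

lemma int_pow_Zp_inf:
  assumes "p > 0" "x \<in> carrier (Zp_inf p)"
  shows "x [^]\<^bsub>Zp_inf p\<^esub> (k::int) = frac (of_int k * x)"
proof (cases "k < 0")
  case True
  have "frac (of_nat (nat (- k)) * x) \<in> carrier (Zp_inf p)"
    using frac_of_int_mult_in_carrier_Zp_inf[OF assms, of "- k"] True by simp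
  then show ?thesis
    using True assms by (simp add: int_pow_def2 nat_pow_Zp_inf inv_Zp_inf frac_neg_frac)
next
  case False
  then show ?thesis by (simp add: int_pow_def2 nat_pow_Zp_inf)
qed

lemma inverse_in_carrier_Zp_inf: "p > 1 \<Longrightarrow> 1 / of_nat p \<in> carrier (Zp_inf p)"
  unfolding carrier_Zp_inf padic_fractions_def by (auto intro!: exI[of _ 1] exI[of _ 1])

lemma int_pow_inverse_Zp_inf_eq_one_iff:
  assumes "p > 1"
  shows "(1 / of_nat p) [^]\<^bsub>Zp_inf p\<^esub> (c::int) = \<one>\<^bsub>Zp_inf p\<^esub> \<longleftrightarrow> int p dvd c"
proof -
  have "(1 / of_nat p) [^]\<^bsub>Zp_inf p\<^esub> c = frac (of_int c / of_nat p)"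
    using assms int_pow_Zp_inf[OF _ inverse_in_carrier_Zp_inf, of p c] by simp
  then show ?thesis
    using assms of_int_divide_in_Ints_iff[of p c] by (simp add: one_Zp_inf frac_eq_0_iff)
qed

section \<open>Divisible groups\<close>

definition divisible_group :: "('a, 'b) monoid_scheme \<Rightarrow> bool" where
  "divisible_group H \<longleftrightarrow> (\<forall>y\<in>carrier H. \<forall>n::nat. n > 0 \<longrightarrow> (\<exists>e\<in>carrier H. e [^]\<^bsub>H\<^esub> n = y))"

lemma Zp_inf_root_coprime:
  assumes "p > 0" "coprime n p" "x \<in> carrier (Zp_inf p)"
  shows "\<exists>e\<in>carrier (Zp_inf p). e [^]\<^bsub>Zp_inf p\<^esub> n = x"
proof -
  from assms(3) obtain k a where x: "x = of_int a / of_nat p ^ k" and x01: "0 \<le> x" "x < 1"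
    unfolding carrier_Zp_inf padic_fractions_def by auto
  have "coprime (int n) (int p ^ k)" using assms(2) by simp
  then obtain u v where uv: "u * int n + v * int p ^ k = 1"
    using bezout_int[of "int n" "int p ^ k"] by auto
  define e :: rat where "e = frac (of_int (u * a) / of_nat p ^ k)"
  have e: "e \<in> carrier (Zp_inf p)"
    unfolding e_def by (rule frac_in_carrier_Zp_inf[OF assms(1)]) (unfold padic_fractions_def, blast)
  have eq: "of_nat n * (of_int (u * a) / of_nat p ^ k) = x + of_int (- v * a)"
  proof -
    have "of_int u * of_nat n + of_int v * of_nat p ^ k = (1 :: rat)"
      using arg_cong[OF uv, of rat_of_int] by simp
    then show ?thesis
      using assms(1) by (simp add: x field_simps) (metis distrib_left mult.right_neutral)
  qed
  have "frac (x + of_int (- v * a)) = x"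
    using x01 by (simp only: frac_add_of_int_right) (simp add: frac_eq)
  then have "e [^]\<^bsub>Zp_inf p\<^esub> n = x"
    by (simp only: e_def nat_pow_Zp_inf frac_of_nat_mult_frac eq)
  then show ?thesis using e by blast
qed

lemma Zp_inf_root_p:
  assumes "p > 0" "x \<in> carrier (Zp_inf p)"
  shows "x / of_nat p \<in> carrier (Zp_inf p)" and "(x / of_nat p) [^]\<^bsub>Zp_inf p\<^esub> p = x"
proof -
  from assms(2) obtain k a where x: "x = of_int a / of_nat p ^ k" and x01: "0 \<le> x" "x < 1"
    unfolding carrier_Zp_inf padic_fractions_def by auto
  have "x / of_nat p = of_int a / of_nat p ^ Suc k" by (simp add: x)
  then have "x / of_nat p \<in> padic_fractions p" unfolding padic_fractions_def by blast
  moreover have "0 \<le> x / of_nat p" "x / of_nat p < 1" using x01 assms(1) by simp_all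
  ultimately show "x / of_nat p \<in> carrier (Zp_inf p)" unfolding carrier_Zp_inf by simp
  show "(x / of_nat p) [^]\<^bsub>Zp_inf p\<^esub> p = x"
    using x01 assms(1) by (simp add: nat_pow_Zp_inf frac_eq)
qed

lemma divisible_Zp_inf:
  assumes p: "Factorial_Ring.prime p"
  shows "divisible_group (Zp_inf p)"
  unfolding divisible_group_def
proof (intro ballI allI impI)
  fix x and n :: nat
  assume "x \<in> carrier (Zp_inf p)" "n > 0"
  then show "\<exists>e\<in>carrier (Zp_inf p). e [^]\<^bsub>Zp_inf p\<^esub> n = x"
  proof (induction n arbitrary: x rule: less_induct)
    case (less n)
    have p0: "p > 0" using p prime_gt_0_nat by blast
    show ?case
    proof (cases "p dvd n")
      case True
      then obtain m where n: "n = p * m" by blast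
      then have "0 < m" "m < n" using less.prems(2) prime_gt_1_nat[OF p] by auto
      then obtain e where e: "e \<in> carrier (Zp_inf p)" "e [^]\<^bsub>Zp_inf p\<^esub> m = x"
        using less by blast
      have "monoid (Zp_inf p)"
        using comm_group_Zp_inf[OF p0] by (simp add: comm_group_def comm_monoid_def)
      then have "(e / of_nat p) [^]\<^bsub>Zp_inf p\<^esub> n = x"
        using Zp_inf_root_p[OF p0 e(1)] e(2) by (simp add: n monoid.nat_pow_pow[symmetric])
      then show ?thesis using Zp_inf_root_p(1)[OF p0 e(1)] by blast
    next
      case False
      then have "coprime n p" using p by (metis coprime_commute prime_imp_coprime)
      then show ?thesis using Zp_inf_root_coprime[OF p0 _ less.prems(1)] by blast
    qed
  qed
qed

lemma nat_pow_sum_group_apply: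
  "i \<in> I \<Longrightarrow> (x [^]\<^bsub>sum_group I G\<^esub> (n::nat)) i = x i [^]\<^bsub>G i\<^esub> n"
  by (induction n) simp_all

lemma divisible_sum_group:
  assumes grp: "\<And>i. i \<in> I \<Longrightarrow> group (G i)" and div: "\<And>i. i \<in> I \<Longrightarrow> divisible_group (G i)"
  shows "divisible_group (sum_group I G)"
  unfolding divisible_group_def
proof (intro ballI allI impI)
  fix x and n :: nat
  assume x: "x \<in> carrier (sum_group I G)" and n: "n > 0"
  have xi: "x i \<in> carrier (G i)" if "i \<in> I" for i
    using x that by (auto simp: carrier_sum_group[OF grp])
  define root where "root i = (SOME e. e \<in> carrier (G i) \<and> e [^]\<^bsub>G i\<^esub> n = x i)" for i
  have root: "root i \<in> carrier (G i) \<and> root i [^]\<^bsub>G i\<^esub> n = x i" if "i \<in> I" for i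
    unfolding root_def
    by (rule someI_ex) (use div[OF that] xi[OF that] n in \<open>auto simp: divisible_group_def\<close>)
  define e where "e = (\<lambda>i\<in>I. if x i = \<one>\<^bsub>G i\<^esub> then \<one>\<^bsub>G i\<^esub> else root i)"
  have ei: "e i \<in> carrier (G i) \<and> e i [^]\<^bsub>G i\<^esub> n = x i" if "i \<in> I" for i
    using root[OF that] grp[OF that] that by (auto simp: e_def group.is_monoid monoid.nat_pow_one)
  have "{i \<in> I. e i \<noteq> \<one>\<^bsub>G i\<^esub>} \<subseteq> {i \<in> I. x i \<noteq> \<one>\<^bsub>G i\<^esub>}"
    by (auto simp: e_def)
  moreover have "e \<in> extensional I" by (simp add: e_def)
  ultimately have e: "e \<in> carrier (sum_group I G)"
    using x ei by (auto simp: carrier_sum_group[OF grp] PiE_iff intro: finite_subset)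
  have "e [^]\<^bsub>sum_group I G\<^esub> n = x"
  proof (rule PiE_ext)
    show "e [^]\<^bsub>sum_group I G\<^esub> n \<in> (\<Pi>\<^sub>E i\<in>I. carrier (G i))"
      using monoid.nat_pow_closed[OF group.is_monoid[OF sum_group[OF grp]] e, of n]
      by (simp add: carrier_sum_group[OF grp])
    show "x \<in> (\<Pi>\<^sub>E i\<in>I. carrier (G i))" using x by (simp add: carrier_sum_group[OF grp])
  qed (simp add: nat_pow_sum_group_apply ei)
  then show "\<exists>e\<in>carrier (sum_group I G). e [^]\<^bsub>sum_group I G\<^esub> n = x" using e by blast
qed

lemma sum_group_projection_hom:
  assumes "\<And>i. i \<in> I \<Longrightarrow> group (G i)" "j \<in> I"
  shows "(\<lambda>x. x j) \<in> hom (sum_group I G) (G j)"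
  using assms by (auto simp: hom_def carrier_sum_group)

lemma group_Zp_inf_sum: "p > 0 \<Longrightarrow> group (Zp_inf_sum p)"
  using comm_group_Zp_inf unfolding Zp_inf_sum_def by (simp add: comm_group.axioms(2))

lemma comm_group_Zp_inf_sum:
  assumes "p > 0"
  shows "comm_group (Zp_inf_sum p)"
proof (rule group.group_comm_groupI[OF group_Zp_inf_sum[OF assms]])
  fix x y
  show "x \<otimes>\<^bsub>Zp_inf_sum p\<^esub> y = y \<otimes>\<^bsub>Zp_inf_sum p\<^esub> x"
    unfolding Zp_inf_sum_def mult_sum_group mult_Zp_inf by (simp add: add.commute)
qed

lemma carrier_Zp_inf_sum:
  assumes "p > 0"
  shows "x \<in> carrier (Zp_inf_sum p) \<longleftrightarrow> (\<forall>i. x i \<in> carrier (Zp_inf p)) \<and> finite {i. x i \<noteq> 0}"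
  using comm_group_Zp_inf[OF assms] unfolding Zp_inf_sum_def
  by (simp add: carrier_sum_group comm_group.axioms(2) one_Zp_inf PiE_UNIV_domain Pi_iff)

lemma divisible_Zp_inf_sum: "Factorial_Ring.prime p \<Longrightarrow> divisible_group (Zp_inf_sum p)"
  unfolding Zp_inf_sum_def
  by (intro divisible_sum_group divisible_Zp_inf comm_group.axioms(2) comm_group_Zp_inf prime_gt_0_nat)

lemma countable_carrier_Zp_inf_sum:
  assumes "p > 0"
  shows "countable (carrier (Zp_inf_sum p))"
proof (rule countable_subset)
  show "carrier (Zp_inf_sum p) \<subseteq> range (\<lambda>xs i. if i < length xs then xs ! i else (0::rat))"
  proof
    fix x assume "x \<in> carrier (Zp_inf_sum p)"
    then obtain N where "{i. x i \<noteq> 0} \<subseteq> {..<N}"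
      using carrier_Zp_inf_sum[OF assms] finite_nat_bounded by blast
    then have "x = (\<lambda>i. if i < length (map x [0..<N]) then map x [0..<N] ! i else 0)"
      by (auto simp: fun_eq_iff)
    then show "x \<in> range (\<lambda>xs i. if i < length xs then xs ! i else (0::rat))" by blast
  qed
qed simp

definition Zp_inf_sum_unit :: "nat \<Rightarrow> nat \<Rightarrow> nat \<Rightarrow> rat" where
  "Zp_inf_sum_unit p i = (\<lambda>j. if j = i then 1 / of_nat p else 0)"

lemma Zp_inf_sum_unit_in_carrier: "p > 1 \<Longrightarrow> Zp_inf_sum_unit p i \<in> carrier (Zp_inf_sum p)"
  using inverse_in_carrier_Zp_inf[of p] of_int_in_padic_fractions[of p 0]
  by (auto simp: carrier_Zp_inf_sum carrier_Zp_inf Zp_inf_sum_unit_def)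

section \<open>Extending homomorphisms into divisible groups\<close>

lemma (in group) mult_int_pow_eq_mult_int_pow_iff:
  assumes "x \<in> carrier G" "y \<in> carrier G" "g \<in> carrier G"
  shows "x \<otimes> g [^] (k::int) = y \<otimes> g [^] (l::int) \<longleftrightarrow> y = x \<otimes> g [^] (k - l)"
proof -
  have "x \<otimes> g [^] k = y \<otimes> g [^] l \<longleftrightarrow> x \<otimes> g [^] k \<otimes> inv (g [^] l) = y"
    using assms by (simp add: inv_solve_right')
  also have "x \<otimes> g [^] k \<otimes> inv (g [^] l) = x \<otimes> g [^] (k - l)"
    using assms by (simp add: int_pow_diff m_assoc)
  finally show ?thesis by auto
qed

text \<open>Partial homomorphisms are represented by their graphs, defined on the subgroup
  \<open>Domain R\<close>, so that a chain of them can be joined by a union.\<close>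

definition partial_hom :: "('a, 'c) monoid_scheme \<Rightarrow> ('b, 'd) monoid_scheme \<Rightarrow> ('a \<times> 'b) set \<Rightarrow> bool" where
  "partial_hom G H R \<longleftrightarrow> R \<subseteq> carrier G \<times> carrier H \<and> (\<one>\<^bsub>G\<^esub>, \<one>\<^bsub>H\<^esub>) \<in> R \<and>
     (\<forall>x a y b. (x, a) \<in> R \<longrightarrow> (y, b) \<in> R \<longrightarrow> (x \<otimes>\<^bsub>G\<^esub> y, a \<otimes>\<^bsub>H\<^esub> b) \<in> R) \<and>
     (\<forall>x a. (x, a) \<in> R \<longrightarrow> (inv\<^bsub>G\<^esub> x, inv\<^bsub>H\<^esub> a) \<in> R) \<and>
     (\<forall>x a b. (x, a) \<in> R \<longrightarrow> (x, b) \<in> R \<longrightarrow> a = b)"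

lemma partial_hom_in_carrier:
  "partial_hom G H R \<Longrightarrow> (x, a) \<in> R \<Longrightarrow> x \<in> carrier G \<and> a \<in> carrier H"
  unfolding partial_hom_def by blast

lemma partial_hom_one: "partial_hom G H R \<Longrightarrow> (\<one>\<^bsub>G\<^esub>, \<one>\<^bsub>H\<^esub>) \<in> R"
  unfolding partial_hom_def by blast

lemma partial_hom_mult:
  "partial_hom G H R \<Longrightarrow> (x, a) \<in> R \<Longrightarrow> (y, b) \<in> R \<Longrightarrow> (x \<otimes>\<^bsub>G\<^esub> y, a \<otimes>\<^bsub>H\<^esub> b) \<in> R"
  unfolding partial_hom_def by blast

lemma partial_hom_inv: "partial_hom G H R \<Longrightarrow> (x, a) \<in> R \<Longrightarrow> (inv\<^bsub>G\<^esub> x, inv\<^bsub>H\<^esub> a) \<in> R"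
  unfolding partial_hom_def by blast

lemma partial_hom_unique: "partial_hom G H R \<Longrightarrow> (x, a) \<in> R \<Longrightarrow> (x, b) \<in> R \<Longrightarrow> a = b"
  unfolding partial_hom_def by blast

lemma partial_hom_int_pow:
  assumes R: "partial_hom G H R" and xa: "(x, a) \<in> R"
  shows "(x [^]\<^bsub>G\<^esub> (k::int), a [^]\<^bsub>H\<^esub> k) \<in> R"
proof -
  have nat_pow: "(x [^]\<^bsub>G\<^esub> (n::nat), a [^]\<^bsub>H\<^esub> n) \<in> R" for n
  proof (induction n)
    case 0
    show ?case unfolding nat_pow_0 by (rule partial_hom_one[OF R])
  next
    case (Suc n)
    show ?case unfolding nat_pow_Suc by (rule partial_hom_mult[OF R Suc xa])
  qed
  show ?thesis
  proof (cases "k < 0")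
    case True
    then show ?thesis using partial_hom_inv[OF R nat_pow] by (simp only: int_pow_def2 if_True)
  next
    case False
    then show ?thesis using nat_pow by (simp only: int_pow_def2 if_False)
  qed
qed

lemma Domain_partial_hom_int_pow:
  "partial_hom G H R \<Longrightarrow> x \<in> Domain R \<Longrightarrow> x [^]\<^bsub>G\<^esub> (k::int) \<in> Domain R"
  by (elim DomainE) (rule DomainI, erule (1) partial_hom_int_pow)

lemma partial_hom_Union:
  assumes "C \<noteq> {}" and hom: "\<And>R. R \<in> C \<Longrightarrow> partial_hom G H R" and "chain\<^sub>\<subseteq> C"
  shows "partial_hom G H (\<Union>C)"
proof -
  have two: "\<exists>R\<in>C. z \<in> R \<and> w \<in> R" if "z \<in> \<Union>C" "w \<in> \<Union>C" for z w
    using that assms(3) unfolding chain_subset_def by blast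
  show ?thesis
    unfolding partial_hom_def
  proof (intro conjI allI impI)
    show "\<Union>C \<subseteq> carrier G \<times> carrier H"
      using hom unfolding partial_hom_def by blast
    obtain R where "R \<in> C" using assms(1) by blast
    then show "(\<one>\<^bsub>G\<^esub>, \<one>\<^bsub>H\<^esub>) \<in> \<Union>C" using partial_hom_one[OF hom] by blast
  next
    fix x a y b assume "(x, a) \<in> \<Union>C" "(y, b) \<in> \<Union>C"
    then obtain R where "R \<in> C" "(x, a) \<in> R" "(y, b) \<in> R" using two by blast
    then show "(x \<otimes>\<^bsub>G\<^esub> y, a \<otimes>\<^bsub>H\<^esub> b) \<in> \<Union>C" using partial_hom_mult[OF hom] by blast
  next
    fix x a assume "(x, a) \<in> \<Union>C"
    then obtain R where "R \<in> C" "(x, a) \<in> R" by blast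
    then show "(inv\<^bsub>G\<^esub> x, inv\<^bsub>H\<^esub> a) \<in> \<Union>C" using partial_hom_inv[OF hom] by blast
  next
    fix x a b assume "(x, a) \<in> \<Union>C" "(x, b) \<in> \<Union>C"
    then obtain R where "R \<in> C" "(x, a) \<in> R" "(x, b) \<in> R" using two by blast
    then show "a = b" using partial_hom_unique[OF hom] by blast
  qed
qed

lemma partial_hom_total_imp_hom:
  assumes R: "partial_hom G H R" and total: "Domain R = carrier G"
  shows "\<exists>h\<in>hom G H. \<forall>(x, a)\<in>R. h x = a"
proof -
  define h where "h x = (THE a. (x, a) \<in> R)" for x
  have h: "h x = a" if xa: "(x, a) \<in> R" for x a
    unfolding h_def
  proof (rule the_equality)
    show "(x, a) \<in> R" by (rule xa)
    fix b assume "(x, b) \<in> R"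
    then show "b = a" using partial_hom_unique[OF R xa] by simp
  qed
  have graph: "(x, h x) \<in> R" if "x \<in> carrier G" for x
  proof -
    have "x \<in> Domain R" using that total by simp
    then obtain a where a: "(x, a) \<in> R" by (rule DomainE)
    then show ?thesis using h[OF a] by simp
  qed
  have "h \<in> hom G H"
  proof (rule homI)
    fix x assume "x \<in> carrier G"
    then show "h x \<in> carrier H" using partial_hom_in_carrier[OF R graph] by simp
  next
    fix x y assume "x \<in> carrier G" "y \<in> carrier G"
    then show "h (x \<otimes>\<^bsub>G\<^esub> y) = h x \<otimes>\<^bsub>H\<^esub> h y"
      using h[OF partial_hom_mult[OF R graph graph]] by simp
  qed
  moreover have "\<forall>(x, a)\<in>R. h x = a" using h by auto
  ultimately show ?thesis by blast
qed

definition adjoin :: "('a, 'c) monoid_scheme \<Rightarrow> ('b, 'd) monoid_scheme \<Rightarrow> ('a \<times> 'b) set \<Rightarrow> 'a \<Rightarrow> 'b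
    \<Rightarrow> ('a \<times> 'b) set" where
  "adjoin G H R g e = {(x \<otimes>\<^bsub>G\<^esub> g [^]\<^bsub>G\<^esub> (k::int), a \<otimes>\<^bsub>H\<^esub> e [^]\<^bsub>H\<^esub> k) | x a k. (x, a) \<in> R}"

lemma adjoinI:
  "(x, a) \<in> R \<Longrightarrow> (x \<otimes>\<^bsub>G\<^esub> g [^]\<^bsub>G\<^esub> (k::int), a \<otimes>\<^bsub>H\<^esub> e [^]\<^bsub>H\<^esub> k) \<in> adjoin G H R g e"
  unfolding adjoin_def by blast

lemma adjoinE:
  assumes "(z, c) \<in> adjoin G H R g e"
  obtains x a k where "z = x \<otimes>\<^bsub>G\<^esub> g [^]\<^bsub>G\<^esub> (k::int)" "c = a \<otimes>\<^bsub>H\<^esub> e [^]\<^bsub>H\<^esub> k" "(x, a) \<in> R"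
  using assms unfolding adjoin_def by blast

lemma Domain_adjoin: "Domain (adjoin G H R g e) = {x \<otimes>\<^bsub>G\<^esub> g [^]\<^bsub>G\<^esub> (k::int) | x k. x \<in> Domain R}"
  unfolding adjoin_def by blast

locale two_comm_groups = G: comm_group G + H: comm_group H for G H
begin

lemma subset_adjoin:
  assumes "partial_hom G H R" "g \<in> carrier G" "e \<in> carrier H"
  shows "R \<subseteq> adjoin G H R g e"
proof (clarify)
  fix x a assume xa: "(x, a) \<in> R"
  then have "(x \<otimes>\<^bsub>G\<^esub> g [^]\<^bsub>G\<^esub> (0::int), a \<otimes>\<^bsub>H\<^esub> e [^]\<^bsub>H\<^esub> (0::int)) = (x, a)"
    using partial_hom_in_carrier[OF assms(1)] by simp
  then show "(x, a) \<in> adjoin G H R g e" using adjoinI[OF xa, of G g 0 H e] by simp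
qed

lemma in_adjoin:
  assumes "partial_hom G H R" "g \<in> carrier G" "e \<in> carrier H"
  shows "(g, e) \<in> adjoin G H R g e"
  using adjoinI[OF partial_hom_one[OF assms(1)], of G g 1 H e] assms by simp

lemma adjoin_unique:
  assumes R: "partial_hom G H R" and g: "g \<in> carrier G" and e: "e \<in> carrier H"
    and compatible: "\<And>k::int. g [^]\<^bsub>G\<^esub> k \<in> Domain R \<Longrightarrow> (g [^]\<^bsub>G\<^esub> k, e [^]\<^bsub>H\<^esub> k) \<in> R"
    and xa: "(x, a) \<in> R" and yb: "(y, b) \<in> R"
    and eq: "x \<otimes>\<^bsub>G\<^esub> g [^]\<^bsub>G\<^esub> (k::int) = y \<otimes>\<^bsub>G\<^esub> g [^]\<^bsub>G\<^esub> (l::int)"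
  shows "a \<otimes>\<^bsub>H\<^esub> e [^]\<^bsub>H\<^esub> k = b \<otimes>\<^bsub>H\<^esub> e [^]\<^bsub>H\<^esub> l"
proof -
  have x: "x \<in> carrier G" and a: "a \<in> carrier H" and y: "y \<in> carrier G" and b: "b \<in> carrier H"
    using partial_hom_in_carrier[OF R xa] partial_hom_in_carrier[OF R yb] by auto
  have quotient: "(inv\<^bsub>G\<^esub> x \<otimes>\<^bsub>G\<^esub> y, inv\<^bsub>H\<^esub> a \<otimes>\<^bsub>H\<^esub> b) \<in> R"
    by (rule partial_hom_mult[OF R partial_hom_inv[OF R xa] yb])
  have "inv\<^bsub>G\<^esub> x \<otimes>\<^bsub>G\<^esub> y = g [^]\<^bsub>G\<^esub> (k - l)"
    using eq x y g by (simp add: G.mult_int_pow_eq_mult_int_pow_iff G.inv_solve_left')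
  then have "(inv\<^bsub>G\<^esub> x \<otimes>\<^bsub>G\<^esub> y, e [^]\<^bsub>H\<^esub> (k - l)) \<in> R"
    using compatible quotient by (metis DomainI)
  then have "inv\<^bsub>H\<^esub> a \<otimes>\<^bsub>H\<^esub> b = e [^]\<^bsub>H\<^esub> (k - l)"
    by (rule partial_hom_unique[OF R quotient])
  then show ?thesis
    using a b e by (simp add: H.mult_int_pow_eq_mult_int_pow_iff H.inv_solve_left')
qed

lemma adjoin_mult:
  assumes R: "partial_hom G H R" and g: "g \<in> carrier G" and e: "e \<in> carrier H"
    and "(z1, c1) \<in> adjoin G H R g e" "(z2, c2) \<in> adjoin G H R g e"
  shows "(z1 \<otimes>\<^bsub>G\<^esub> z2, c1 \<otimes>\<^bsub>H\<^esub> c2) \<in> adjoin G H R g e"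
proof -
  obtain x a k y b l where 1: "z1 = x \<otimes>\<^bsub>G\<^esub> g [^]\<^bsub>G\<^esub> (k::int)" "c1 = a \<otimes>\<^bsub>H\<^esub> e [^]\<^bsub>H\<^esub> k" "(x, a) \<in> R"
    and 2: "z2 = y \<otimes>\<^bsub>G\<^esub> g [^]\<^bsub>G\<^esub> (l::int)" "c2 = b \<otimes>\<^bsub>H\<^esub> e [^]\<^bsub>H\<^esub> l" "(y, b) \<in> R"
    using assms(4,5) by (metis adjoinE)
  have "x \<in> carrier G" "a \<in> carrier H" "y \<in> carrier G" "b \<in> carrier H"
    using partial_hom_in_carrier[OF R 1(3)] partial_hom_in_carrier[OF R 2(3)] by auto
  then have "z1 \<otimes>\<^bsub>G\<^esub> z2 = (x \<otimes>\<^bsub>G\<^esub> y) \<otimes>\<^bsub>G\<^esub> g [^]\<^bsub>G\<^esub> (k + l)"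
    and "c1 \<otimes>\<^bsub>H\<^esub> c2 = (a \<otimes>\<^bsub>H\<^esub> b) \<otimes>\<^bsub>H\<^esub> e [^]\<^bsub>H\<^esub> (k + l)"
    using g e by (simp_all add: 1 2 G.int_pow_mult H.int_pow_mult G.m_ac H.m_ac)
  then show ?thesis using adjoinI[OF partial_hom_mult[OF R 1(3) 2(3)]] by simp
qed

lemma adjoin_inv:
  assumes R: "partial_hom G H R" and g: "g \<in> carrier G" and e: "e \<in> carrier H"
    and "(z, c) \<in> adjoin G H R g e"
  shows "(inv\<^bsub>G\<^esub> z, inv\<^bsub>H\<^esub> c) \<in> adjoin G H R g e"
proof -
  obtain x a k where 1: "z = x \<otimes>\<^bsub>G\<^esub> g [^]\<^bsub>G\<^esub> (k::int)" "c = a \<otimes>\<^bsub>H\<^esub> e [^]\<^bsub>H\<^esub> k" "(x, a) \<in> R"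
    using assms(4) by (rule adjoinE)
  have "x \<in> carrier G" "a \<in> carrier H" using partial_hom_in_carrier[OF R 1(3)] by auto
  then have "inv\<^bsub>G\<^esub> z = inv\<^bsub>G\<^esub> x \<otimes>\<^bsub>G\<^esub> g [^]\<^bsub>G\<^esub> (- k)"
    and "inv\<^bsub>H\<^esub> c = inv\<^bsub>H\<^esub> a \<otimes>\<^bsub>H\<^esub> e [^]\<^bsub>H\<^esub> (- k)"
    using g e by (simp_all add: 1 G.inv_mult H.inv_mult G.int_pow_neg H.int_pow_neg)
  then show ?thesis using adjoinI[OF partial_hom_inv[OF R 1(3)]] by simp
qed

lemma partial_hom_adjoin:
  assumes R: "partial_hom G H R" and g: "g \<in> carrier G" and e: "e \<in> carrier H"
    and compatible: "\<And>k::int. g [^]\<^bsub>G\<^esub> k \<in> Domain R \<Longrightarrow> (g [^]\<^bsub>G\<^esub> k, e [^]\<^bsub>H\<^esub> k) \<in> R"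
  shows "partial_hom G H (adjoin G H R g e)"
  unfolding partial_hom_def
proof (intro conjI allI impI adjoin_mult[OF R g e] adjoin_inv[OF R g e])
  show "adjoin G H R g e \<subseteq> carrier G \<times> carrier H"
  proof clarify
    fix z c assume "(z, c) \<in> adjoin G H R g e"
    then show "z \<in> carrier G \<and> c \<in> carrier H"
      by (rule adjoinE) (use partial_hom_in_carrier[OF R] g e in simp)
  qed
  show "(\<one>\<^bsub>G\<^esub>, \<one>\<^bsub>H\<^esub>) \<in> adjoin G H R g e"
    using subset_adjoin[OF R g e] partial_hom_one[OF R] by blast
next
  fix z c1 c2 assume "(z, c1) \<in> adjoin G H R g e" "(z, c2) \<in> adjoin G H R g e"
  then obtain x a k y b l where 1: "z = x \<otimes>\<^bsub>G\<^esub> g [^]\<^bsub>G\<^esub> (k::int)" "c1 = a \<otimes>\<^bsub>H\<^esub> e [^]\<^bsub>H\<^esub> k" "(x, a) \<in> R"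
    and 2: "z = y \<otimes>\<^bsub>G\<^esub> g [^]\<^bsub>G\<^esub> (l::int)" "c2 = b \<otimes>\<^bsub>H\<^esub> e [^]\<^bsub>H\<^esub> l" "(y, b) \<in> R"
    by (metis adjoinE)
  show "c1 = c2"
    unfolding 1(2) 2(2) by (rule adjoin_unique[OF R g e compatible 1(3) 2(3) trans[OF 1(1)[symmetric] 2(1)]])
qed

lemma least_pow_in_Domain_dvd:
  assumes R: "partial_hom G H R" and g: "g \<in> carrier G"
    and n: "n > 0" "g [^]\<^bsub>G\<^esub> n \<in> Domain R"
    and least: "\<And>m::nat. 0 < m \<Longrightarrow> m < n \<Longrightarrow> g [^]\<^bsub>G\<^esub> m \<notin> Domain R"
    and k: "g [^]\<^bsub>G\<^esub> (k::int) \<in> Domain R"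
  shows "int n dvd k"
proof -
  define q r where "q = k div int n" and "r = k mod int n"
  have "g [^]\<^bsub>G\<^esub> k = g [^]\<^bsub>G\<^esub> (int n * q + r)" by (simp add: q_def r_def)
  also have "\<dots> = (g [^]\<^bsub>G\<^esub> n) [^]\<^bsub>G\<^esub> q \<otimes>\<^bsub>G\<^esub> g [^]\<^bsub>G\<^esub> r"
    using g by (simp add: G.int_pow_mult G.int_pow_pow flip: int_pow_int)
  finally have "g [^]\<^bsub>G\<^esub> k = (g [^]\<^bsub>G\<^esub> n) [^]\<^bsub>G\<^esub> q \<otimes>\<^bsub>G\<^esub> g [^]\<^bsub>G\<^esub> r" .
  then have "g [^]\<^bsub>G\<^esub> r = inv\<^bsub>G\<^esub> ((g [^]\<^bsub>G\<^esub> n) [^]\<^bsub>G\<^esub> q) \<otimes>\<^bsub>G\<^esub> g [^]\<^bsub>G\<^esub> k"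
    using g by (simp add: G.inv_solve_left)
  moreover have "inv\<^bsub>G\<^esub> ((g [^]\<^bsub>G\<^esub> n) [^]\<^bsub>G\<^esub> q) \<otimes>\<^bsub>G\<^esub> g [^]\<^bsub>G\<^esub> k \<in> Domain R"
  proof -
    obtain b c where "(g [^]\<^bsub>G\<^esub> n, b) \<in> R" "(g [^]\<^bsub>G\<^esub> k, c) \<in> R" using n(2) k by blast
    then have "(inv\<^bsub>G\<^esub> ((g [^]\<^bsub>G\<^esub> n) [^]\<^bsub>G\<^esub> q) \<otimes>\<^bsub>G\<^esub> g [^]\<^bsub>G\<^esub> k, inv\<^bsub>H\<^esub> (b [^]\<^bsub>H\<^esub> q) \<otimes>\<^bsub>H\<^esub> c) \<in> R"
      by (intro partial_hom_mult[OF R] partial_hom_inv[OF R] partial_hom_int_pow[OF R])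
    then show ?thesis by (rule DomainI)
  qed
  ultimately have "g [^]\<^bsub>G\<^esub> nat r \<in> Domain R"
    using n(1) by (simp add: r_def flip: int_pow_int)
  moreover have "0 \<le> r" "r < int n" using n(1) by (simp_all add: r_def)
  ultimately have "r = 0" using least[of "nat r"] by linarith
  then show ?thesis by (simp add: r_def mod_eq_0_iff_dvd)
qed

text \<open>If \<open>n\<close> is least positive with \<open>g [^] n \<in> Domain R\<close>, any \<open>n\<close>-th root of the image of
  \<open>g [^] n\<close> is compatible; this is the only use of divisibility.\<close>

lemma exists_compatible_value:
  assumes div: "divisible_group H" and R: "partial_hom G H R" and g: "g \<in> carrier G"
  shows "\<exists>e\<in>carrier H. \<forall>k::int. g [^]\<^bsub>G\<^esub> k \<in> Domain R \<longrightarrow> (g [^]\<^bsub>G\<^esub> k, e [^]\<^bsub>H\<^esub> k) \<in> R"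
proof (cases "\<exists>n::nat. n > 0 \<and> g [^]\<^bsub>G\<^esub> n \<in> Domain R")
  case False
  have zero: "k = 0" if k: "g [^]\<^bsub>G\<^esub> (k::int) \<in> Domain R" for k
  proof (rule ccontr)
    assume "k \<noteq> 0"
    have "(g [^]\<^bsub>G\<^esub> k) [^]\<^bsub>G\<^esub> sgn k \<in> Domain R"
      by (rule Domain_partial_hom_int_pow[OF R k])
    moreover have "k * sgn k = int (nat \<bar>k\<bar>)" by (cases "k \<ge> 0") (auto simp: sgn_if)
    ultimately have "g [^]\<^bsub>G\<^esub> nat \<bar>k\<bar> \<in> Domain R"
      by (simp only: G.int_pow_pow[OF g] int_pow_int)
    moreover have "nat \<bar>k\<bar> > 0" using \<open>k \<noteq> 0\<close> by simp
    ultimately show False using False by blast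
  qed
  have "(g [^]\<^bsub>G\<^esub> k, \<one>\<^bsub>H\<^esub> [^]\<^bsub>H\<^esub> k) \<in> R" if "g [^]\<^bsub>G\<^esub> (k::int) \<in> Domain R" for k
    using zero[OF that] partial_hom_one[OF R] by simp
  then show ?thesis using H.one_closed by blast
next
  case True
  define n where "n = (LEAST n::nat. n > 0 \<and> g [^]\<^bsub>G\<^esub> n \<in> Domain R)"
  have n: "n > 0" "g [^]\<^bsub>G\<^esub> n \<in> Domain R"
    using LeastI_ex[OF True] unfolding n_def by auto
  have least: "g [^]\<^bsub>G\<^esub> m \<notin> Domain R" if "0 < m" "m < n" for m
    using not_less_Least[of m] that unfolding n_def by blast
  obtain d where d: "(g [^]\<^bsub>G\<^esub> n, d) \<in> R" using n(2) by blast
  obtain e where e: "e \<in> carrier H" "e [^]\<^bsub>H\<^esub> n = d"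
    using div partial_hom_in_carrier[OF R d] n(1) unfolding divisible_group_def by blast
  have "(g [^]\<^bsub>G\<^esub> k, e [^]\<^bsub>H\<^esub> k) \<in> R" if k: "g [^]\<^bsub>G\<^esub> (k::int) \<in> Domain R" for k
  proof -
    obtain q where k: "k = int n * q" using least_pow_in_Domain_dvd[OF R g n least k] by blast
    have "g [^]\<^bsub>G\<^esub> k = (g [^]\<^bsub>G\<^esub> int n) [^]\<^bsub>G\<^esub> q" "e [^]\<^bsub>H\<^esub> k = (e [^]\<^bsub>H\<^esub> int n) [^]\<^bsub>H\<^esub> q"
      using g e(1) by (simp_all add: k G.int_pow_pow H.int_pow_pow)
    then have "g [^]\<^bsub>G\<^esub> k = (g [^]\<^bsub>G\<^esub> n) [^]\<^bsub>G\<^esub> q" "e [^]\<^bsub>H\<^esub> k = d [^]\<^bsub>H\<^esub> q"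
      by (simp_all only: int_pow_int e(2))
    then show ?thesis using partial_hom_int_pow[OF R d] by simp
  qed
  then show ?thesis using e(1) by blast
qed

lemma maximal_partial_hom_total:
  assumes div: "divisible_group H" and R: "partial_hom G H R"
    and maximal: "\<And>S. partial_hom G H S \<Longrightarrow> R \<subseteq> S \<Longrightarrow> S = R"
  shows "Domain R = carrier G"
proof
  show "Domain R \<subseteq> carrier G" using partial_hom_in_carrier[OF R] by blast
  show "carrier G \<subseteq> Domain R"
  proof
    fix g assume g: "g \<in> carrier G"
    obtain e where e: "e \<in> carrier H"
      and compatible: "\<And>k::int. g [^]\<^bsub>G\<^esub> k \<in> Domain R \<Longrightarrow> (g [^]\<^bsub>G\<^esub> k, e [^]\<^bsub>H\<^esub> k) \<in> R"
      using exists_compatible_value[OF div R g] by blast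
    have "adjoin G H R g e = R"
      by (rule maximal[OF partial_hom_adjoin[OF R g e compatible] subset_adjoin[OF R g e]])
    then show "g \<in> Domain R" using in_adjoin[OF R g e] by blast
  qed
qed

theorem divisible_group_extend_partial_hom:
  assumes div: "divisible_group H" and R0: "partial_hom G H R0"
  shows "\<exists>h\<in>hom G H. \<forall>(x, a)\<in>R0. h x = a"
proof -
  define A where "A = {R. partial_hom G H R \<and> R0 \<subseteq> R}"
  have "\<forall>C\<in>chains A. \<exists>U\<in>A. \<forall>R\<in>C. R \<subseteq> U"
  proof
    fix C assume "C \<in> chains A"
    then have CA: "C \<subseteq> A" and chain: "chain\<^sub>\<subseteq> C" unfolding chains_def by auto
    show "\<exists>U\<in>A. \<forall>R\<in>C. R \<subseteq> U"
    proof (cases "C = {}")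
      case True
      then show ?thesis using R0 unfolding A_def by auto
    next
      case False
      have "partial_hom G H (\<Union>C)"
        by (rule partial_hom_Union[OF False _ chain]) (use CA in \<open>auto simp: A_def\<close>)
      moreover obtain R where "R \<in> C" using False by auto
      then have "R0 \<subseteq> \<Union>C" using CA unfolding A_def by auto
      ultimately show ?thesis unfolding A_def by auto
    qed
  qed
  then obtain M where "M \<in> A" and maximal: "\<forall>S\<in>A. M \<subseteq> S \<longrightarrow> S = M"
    by (blast dest: Zorn_Lemma2)
  then have M: "partial_hom G H M" and "R0 \<subseteq> M" unfolding A_def by auto
  have "Domain M = carrier G"
    by (rule maximal_partial_hom_total[OF div M]) (use \<open>R0 \<subseteq> M\<close> maximal in \<open>auto simp: A_def\<close>)
  then obtain h where h: "h \<in> hom G H" and hM: "\<forall>(x, a)\<in>M. h x = a"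
    using partial_hom_total_imp_hom[OF M] by blast
  have "\<forall>(x, a)\<in>R0. h x = a"
  proof clarify
    fix x a assume "(x, a) \<in> R0"
    from bspec[OF hM subsetD[OF \<open>R0 \<subseteq> M\<close> this]] show "h x = a" by simp
  qed
  then show ?thesis by (rule bexI[OF _ h])
qed

end

section \<open>Infinite rank yields an epimorphism\<close>

lemma ab_independentD:
  assumes "ab_independent G S" "F \<subseteq> S" "finite F" "finprod G (\<lambda>x. x [^]\<^bsub>G\<^esub> (c x :: int)) F = \<one>\<^bsub>G\<^esub>" "x \<in> F"
  shows "c x = 0"
  using assms unfolding ab_independent_def by blast

lemma (in comm_group) finprod_lessThan_Suc_fun_upd:
  assumes s: "\<And>j. s j \<in> carrier G"
  shows "(\<Otimes>j\<in>{..<i}. s j [^] (c j :: int)) \<otimes> s i [^] (k::int) = (\<Otimes>j\<in>{..<Suc i}. s j [^] (c(i := k)) j)"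
proof -
  have "(\<Otimes>j\<in>{..<Suc i}. s j [^] (c(i := k)) j) = s i [^] k \<otimes> (\<Otimes>j\<in>{..<i}. s j [^] (c(i := k)) j)"
    using s by (simp add: lessThan_Suc)
  also have "(\<Otimes>j\<in>{..<i}. s j [^] (c(i := k)) j) = (\<Otimes>j\<in>{..<i}. s j [^] c j)"
    by (rule finprod_cong') (auto simp: s)
  finally show ?thesis using s by (simp add: m_comm)
qed

definition seq_span :: "('a, 'b) monoid_scheme \<Rightarrow> (nat \<Rightarrow> 'a) \<Rightarrow> nat \<Rightarrow> 'a set" where
  "seq_span G s i = range (\<lambda>c. \<Otimes>\<^bsub>G\<^esub>j\<in>{..<i}. s j [^]\<^bsub>G\<^esub> (c j :: int))"

lemma (in comm_group) one_in_seq_span_0: "\<one> \<in> seq_span G s 0"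
  by (simp add: seq_span_def)

lemma (in comm_group) mult_pow_in_seq_span_Suc:
  assumes "\<And>j. s j \<in> carrier G" "x \<in> seq_span G s i"
  shows "x \<otimes> s i [^] (k::int) \<in> seq_span G s (Suc i)"
proof -
  obtain c where x: "x = (\<Otimes>j\<in>{..<i}. s j [^] (c j :: int))"
    using assms(2) unfolding seq_span_def by blast
  have "x \<otimes> s i [^] k = (\<Otimes>j\<in>{..<Suc i}. s j [^] (c(i := k)) j)"
    unfolding x by (rule finprod_lessThan_Suc_fun_upd[OF assms(1)])
  then show ?thesis unfolding seq_span_def by blast
qed

lemma (in comm_group) ab_independent_seq_pow_in_span:
  fixes s :: "nat \<Rightarrow> 'a"
  assumes ind: "ab_independent G S" and inj: "inj s" and sS: "range s \<subseteq> S"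
    and span: "s i [^] (k::int) \<in> seq_span G s i"
  shows "k = 0"
proof -
  have s: "s j \<in> carrier G" for j using ind sS unfolding ab_independent_def by blast
  obtain c where eq: "s i [^] k = (\<Otimes>j\<in>{..<i}. s j [^] (c j :: int))"
    using span unfolding seq_span_def by blast
  define c' where "c' = c(i := - k)"
  have "(\<Otimes>j\<in>{..<Suc i}. s j [^] c' j) = s i [^] k \<otimes> s i [^] (- k)"
    unfolding c'_def eq by (rule finprod_lessThan_Suc_fun_upd[OF s, symmetric])
  also have "\<dots> = \<one>" using s by (simp add: int_pow_neg)
  finally have rel: "(\<Otimes>j\<in>{..<Suc i}. s j [^] c' j) = \<one>" .
  define coeff where "coeff x = c' (inv_into UNIV s x)" for x
  have "(\<Otimes>x\<in>s ` {..<Suc i}. x [^] coeff x) = (\<Otimes>j\<in>{..<Suc i}. s j [^] coeff (s j))"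
    by (rule finprod_reindex) (use inj s in \<open>auto simp: inj_on_def\<close>)
  also have "\<dots> = (\<Otimes>j\<in>{..<Suc i}. s j [^] c' j)"
    by (simp add: coeff_def inv_into_f_f[OF inj])
  finally have "(\<Otimes>x\<in>s ` {..<Suc i}. x [^] coeff x) = \<one>" using rel by simp
  then have "coeff (s i) = 0" using sS by (intro ab_independentD[OF ind]) auto
  then show ?thesis by (simp add: coeff_def c'_def inv_into_f_f[OF inj])
qed

context two_comm_groups
begin

lemma adjoin_independent_seq:
  fixes s :: "nat \<Rightarrow> 'a"
  assumes ind: "ab_independent G S" and inj: "inj s" and sS: "range s \<subseteq> S"
    and R: "partial_hom G H R" and span: "Domain R \<subseteq> seq_span G s i" and e: "e \<in> carrier H"
  shows "partial_hom G H (adjoin G H R (s i) e) \<and> Domain (adjoin G H R (s i) e) \<subseteq> seq_span G s (Suc i)"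
proof
  have s: "s j \<in> carrier G" for j using ind sS unfolding ab_independent_def by blast
  have "(s i [^]\<^bsub>G\<^esub> k, e [^]\<^bsub>H\<^esub> k) \<in> R" if "s i [^]\<^bsub>G\<^esub> (k::int) \<in> Domain R" for k
  proof -
    have "k = 0" using that span by (intro G.ab_independent_seq_pow_in_span[OF ind inj sS]) blast
    then show ?thesis using partial_hom_one[OF R] by simp
  qed
  then show "partial_hom G H (adjoin G H R (s i) e)" by (rule partial_hom_adjoin[OF R s e])
  show "Domain (adjoin G H R (s i) e) \<subseteq> seq_span G s (Suc i)"
    unfolding Domain_adjoin using span by (auto intro: G.mult_pow_in_seq_span_Suc[OF s])
qed

lemma independent_seq_partial_hom:
  fixes s :: "nat \<Rightarrow> 'a" and d :: "nat \<Rightarrow> 'c"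
  assumes ind: "ab_independent G S" and inj: "inj s" and sS: "range s \<subseteq> S"
    and d: "\<And>i. d i \<in> carrier H"
  shows "\<exists>R. partial_hom G H R \<and> (\<forall>i. (s i, d i) \<in> R)"
proof -
  have s: "s j \<in> carrier G" for j using ind sS unfolding ab_independent_def by blast
  define R where "R = rec_nat {(\<one>\<^bsub>G\<^esub>, \<one>\<^bsub>H\<^esub>)} (\<lambda>i Ri. adjoin G H Ri (s i) (d i))"
  have R_Suc: "R (Suc i) = adjoin G H (R i) (s i) (d i)" for i by (simp add: R_def)
  have R: "partial_hom G H (R i) \<and> Domain (R i) \<subseteq> seq_span G s i" for i
  proof (induction i)
    case 0
    have "partial_hom G H {(\<one>\<^bsub>G\<^esub>, \<one>\<^bsub>H\<^esub>)}" by (simp add: partial_hom_def)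
    then show ?case using G.one_in_seq_span_0 by (simp add: R_def)
  next
    case (Suc i)
    then show ?case unfolding R_Suc by (intro adjoin_independent_seq[OF ind inj sS _ _ d]) auto
  qed
  have mono: "R i \<subseteq> R (Suc i)" for i
    unfolding R_Suc using R by (intro subset_adjoin s d) blast
  have "partial_hom G H (\<Union>(range R))"
  proof (rule partial_hom_Union)
    show "chain\<^sub>\<subseteq> (range R)"
      unfolding chain_subset_def using lift_Suc_mono_le[of R, OF mono] by (metis nat_le_linear rangeE)
  qed (use R in auto)
  moreover have "(s i, d i) \<in> \<Union>(range R)" for i
    using in_adjoin[OF conjunct1[OF R] s d] R_Suc by blast
  ultimately show ?thesis by blast
qed

end

theorem infinite_rank_imp_surj_hom_Zp_inf_sum:
  assumes G: "comm_group G" and p: "Factorial_Ring.prime p" and rank: "infinite_rank G"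
  shows "\<exists>h\<in>hom G (Zp_inf_sum p). h ` carrier G = carrier (Zp_inf_sum p)"
proof -
  have p0: "p > 0" using p prime_gt_0_nat by blast
  interpret two_comm_groups G "Zp_inf_sum p"
    by (intro two_comm_groups.intro G comm_group_Zp_inf_sum p0)
  obtain S where S: "infinite S" "ab_independent G S" using rank unfolding infinite_rank_def by blast
  obtain s :: "nat \<Rightarrow> 'a" where inj: "inj s" and sS: "range s \<subseteq> S"
    using infinite_countable_subset[OF S(1)] by blast
  define d where "d = from_nat_into (carrier (Zp_inf_sum p))"
  have d: "range d = carrier (Zp_inf_sum p)"
    unfolding d_def using countable_carrier_Zp_inf_sum[OF p0] H.one_closed by (intro range_from_nat_into) auto
  obtain R where R: "partial_hom G (Zp_inf_sum p) R" and sd: "\<And>i. (s i, d i) \<in> R"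
    using independent_seq_partial_hom[OF S(2) inj sS, of d] d by blast
  obtain h where h: "h \<in> hom G (Zp_inf_sum p)" and hR: "\<forall>(x, a)\<in>R. h x = a"
    using divisible_group_extend_partial_hom[OF divisible_Zp_inf_sum[OF p] R] by blast
  have "h (s i) = d i" for i using bspec[OF hR sd] by simp
  then have "carrier (Zp_inf_sum p) \<subseteq> h ` carrier G"
    using d partial_hom_in_carrier[OF R sd] by (metis image_eqI rangeE subsetI)
  moreover have "h ` carrier G \<subseteq> carrier (Zp_inf_sum p)" using h by (auto simp: hom_def)
  ultimately show ?thesis using h by blast
qed

section \<open>An epimorphism forces infinite rank\<close>

lemma hom_finprod:
  assumes G: "comm_group G" and H: "comm_group H" and h: "h \<in> hom G H"
    and "finite A" "f \<in> A \<rightarrow> carrier G"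
  shows "h (finprod G f A) = finprod H (\<lambda>j. h (f j)) A"
  using assms(4,5)
proof (induction A rule: finite_induct)
  case empty
  then show ?case using hom_one[OF h] G H by (simp add: comm_group.axioms comm_monoid.finprod_empty)
next
  case (insert a A)
  interpret G: comm_group G by (rule G)
  interpret H: comm_group H by (rule H)
  have "f a \<in> carrier G" "f \<in> A \<rightarrow> carrier G" using insert.prems by auto
  moreover have "(\<lambda>j. h (f j)) \<in> insert a A \<rightarrow> carrier H" using insert.prems h by (auto simp: hom_def)
  ultimately show ?case using insert h by (simp add: hom_mult)
qed

lemma torsion_freeD:
  "torsion_free G \<Longrightarrow> x \<in> carrier G \<Longrightarrow> n > 0 \<Longrightarrow> x [^]\<^bsub>G\<^esub> (n::nat) = \<one>\<^bsub>G\<^esub> \<Longrightarrow> x = \<one>\<^bsub>G\<^esub>"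
  unfolding torsion_free_def by blast

lemma torsion_free_finprod_int_pow_cancel:
  fixes G (structure)
  assumes G: "comm_group G" and tf: "torsion_free G" and F: "F \<subseteq> carrier G" "finite F"
    and n: "n > 0" and c: "\<And>y. y \<in> F \<Longrightarrow> c y = int n * c' y"
    and rel: "(\<Otimes>y\<in>F. y [^] (c y :: int)) = \<one>"
  shows "(\<Otimes>y\<in>F. y [^] (c' y :: int)) = \<one>"
proof -
  interpret comm_group G by (rule G)
  have pow_hom: "(\<lambda>x. x [^] n) \<in> hom G G" by (auto simp: hom_def nat_pow_distrib)
  have "(\<Otimes>y\<in>F. y [^] c' y) [^] n = (\<Otimes>y\<in>F. (y [^] c' y) [^] n)"
    by (rule hom_finprod[OF G G pow_hom F(2)]) (use F(1) in auto)
  also have "\<dots> = (\<Otimes>y\<in>F. y [^] c y)"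
    using F(1) by (intro finprod_cong') (auto simp: c int_pow_pow mult.commute simp flip: int_pow_int)
  finally have "(\<Otimes>y\<in>F. y [^] c' y) [^] n = \<one>" using rel by simp
  moreover have "(\<Otimes>y\<in>F. y [^] c' y) \<in> carrier G" using F(1) by (intro finprod_closed) auto
  ultimately show ?thesis using torsion_freeD[OF tf _ n] by blast
qed

lemma int_dvd_all_powers_imp_zero:
  assumes "p > 1" "\<And>m. int p ^ m dvd c"
  shows "c = 0"
proof (rule ccontr)
  assume "c \<noteq> 0"
  then have "int p ^ nat \<bar>c\<bar> \<le> \<bar>c\<bar>" using dvd_imp_le_int[OF _ assms(2)] by fastforce
  moreover have "int (nat \<bar>c\<bar>) < int (p ^ nat \<bar>c\<bar>)"
    using power_gt_expt[of p "nat \<bar>c\<bar>"] assms(1) by (simp only: of_nat_less_iff)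
  ultimately show False by simp
qed

text \<open>Projecting the relation to coordinate \<open>j\<close> leaves only the term \<open>(1/p) [^] c (x j)\<close>.\<close>

lemma unit_lifts_relation_coeff_dvd:
  fixes x :: "nat \<Rightarrow> 'a"
  assumes G: "comm_group G" and p: "p > 1" and h: "h \<in> hom G (Zp_inf_sum p)"
    and x: "\<And>i. x i \<in> carrier G" and hx: "\<And>i. h (x i) = Zp_inf_sum_unit p i" and inj: "inj x"
    and F: "finite F" "F \<subseteq> range x"
    and rel: "(\<Otimes>\<^bsub>G\<^esub>y\<in>F. y [^]\<^bsub>G\<^esub> (c y :: int)) = \<one>\<^bsub>G\<^esub>" and j: "x j \<in> F"
  shows "int p dvd c (x j)"
proof -
  have p0: "p > 0" using p by simp
  have Z: "comm_group (Zp_inf p)" by (rule comm_group_Zp_inf[OF p0])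
  interpret Z: comm_group "Zp_inf p" by (rule Z)
  have gG: "group G" using G by (simp add: comm_group.axioms(2))
  define \<phi> where "\<phi> z = h z j" for z
  have "(\<lambda>z. z j) \<circ> h \<in> hom G (Zp_inf p)"
    using hom_compose[OF h] sum_group_projection_hom[of UNIV "\<lambda>_. Zp_inf p" j] Z
    unfolding Zp_inf_sum_def by (simp add: comm_group.axioms(2))
  then have \<phi>: "\<phi> \<in> hom G (Zp_inf p)" unfolding \<phi>_def by (simp add: comp_def)
  have pow: "(\<lambda>y. y [^]\<^bsub>G\<^esub> c y) \<in> F \<rightarrow> carrier G"
    using F(2) x gG by (auto simp: group.int_pow_closed)
  have "\<one>\<^bsub>Zp_inf p\<^esub> = \<phi> (\<Otimes>\<^bsub>G\<^esub>y\<in>F. y [^]\<^bsub>G\<^esub> c y)"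
    unfolding rel using hom_one[OF \<phi> gG] Z.is_group by simp
  also have "\<dots> = (\<Otimes>\<^bsub>Zp_inf p\<^esub>y\<in>F. \<phi> (y [^]\<^bsub>G\<^esub> c y))"
    by (rule hom_finprod[OF G Z \<phi> F(1) pow])
  also have "\<dots> = (\<Otimes>\<^bsub>Zp_inf p\<^esub>y\<in>F. if y = x j then (1 / of_nat p) [^]\<^bsub>Zp_inf p\<^esub> c y else \<one>\<^bsub>Zp_inf p\<^esub>)"
  proof (rule Z.finprod_cong')
    fix y assume "y \<in> F"
    then obtain i where i: "y = x i" using F(2) by blast
    have "\<phi> (y [^]\<^bsub>G\<^esub> c y) = Zp_inf_sum_unit p i j [^]\<^bsub>Zp_inf p\<^esub> c y"
      using hom_int_pow[OF \<phi> x gG Z.is_group] by (simp add: i \<phi>_def hx)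
    then show "\<phi> (y [^]\<^bsub>G\<^esub> c y) = (if y = x j then (1 / of_nat p) [^]\<^bsub>Zp_inf p\<^esub> c y else \<one>\<^bsub>Zp_inf p\<^esub>)"
      using inj Z.int_pow_one[unfolded one_Zp_inf] by (auto simp: i Zp_inf_sum_unit_def one_Zp_inf inj_eq)
  qed (use inverse_in_carrier_Zp_inf[OF p] in auto)
  also have "\<dots> = (1 / of_nat p) [^]\<^bsub>Zp_inf p\<^esub> c (x j)"
    by (rule Z.finprod_singleton_swap[OF j F(1)]) (use inverse_in_carrier_Zp_inf[OF p] in auto)
  finally show ?thesis using int_pow_inverse_Zp_inf_eq_one_iff[OF p] by metis
qed

lemma unit_lifts_relation_coeff_pow_dvd:
  fixes x :: "nat \<Rightarrow> 'a"
  assumes G: "comm_group G" and tf: "torsion_free G" and p: "p > 1" and h: "h \<in> hom G (Zp_inf_sum p)"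
    and x: "\<And>i. x i \<in> carrier G" and hx: "\<And>i. h (x i) = Zp_inf_sum_unit p i" and inj: "inj x"
    and F: "finite F" "F \<subseteq> range x"
    and rel: "(\<Otimes>\<^bsub>G\<^esub>y\<in>F. y [^]\<^bsub>G\<^esub> (c y :: int)) = \<one>\<^bsub>G\<^esub>" and y: "y \<in> F"
  shows "int p ^ m dvd c y"
  using rel y
proof (induction m arbitrary: c y)
  case 0
  then show ?case by simp
next
  case (Suc m)
  have dvd: "int p dvd c y" if "y \<in> F" for y
    using that F(2) unit_lifts_relation_coeff_dvd[OF G p h x hx inj F Suc.prems(1)] by blast
  define c' where "c' y = c y div int p" for y
  have c: "c y = int p * c' y" if "y \<in> F" for y using dvd[OF that] by (simp add: c'_def)
  have "(\<Otimes>\<^bsub>G\<^esub>y\<in>F. y [^]\<^bsub>G\<^esub> c' y) = \<one>\<^bsub>G\<^esub>"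
    using torsion_free_finprod_int_pow_cancel[OF G tf _ F(1) _ c Suc.prems(1)] F(2) x p by auto
  then have "int p ^ m dvd c' y" by (rule Suc.IH[OF _ Suc.prems(2)])
  then show ?case using c[OF Suc.prems(2)] by simp
qed

theorem surj_hom_Zp_inf_sum_imp_infinite_rank:
  assumes G: "comm_group G" and tf: "torsion_free G" and p: "Factorial_Ring.prime p"
    and h: "h \<in> hom G (Zp_inf_sum p)" and surj: "h ` carrier G = carrier (Zp_inf_sum p)"
  shows "infinite_rank G"
proof -
  have p1: "p > 1" using p prime_gt_1_nat by blast
  have "\<forall>i. \<exists>g. g \<in> carrier G \<and> h g = Zp_inf_sum_unit p i"
  proof
    fix i
    have "Zp_inf_sum_unit p i \<in> h ` carrier G" using Zp_inf_sum_unit_in_carrier[OF p1] surj by simp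
    then show "\<exists>g. g \<in> carrier G \<and> h g = Zp_inf_sum_unit p i" by (elim imageE) auto
  qed
  then obtain x where "\<forall>i. x i \<in> carrier G \<and> h (x i) = Zp_inf_sum_unit p i"
    by (elim choice[THEN exE])
  then have x: "\<And>i. x i \<in> carrier G" and hx: "\<And>i. h (x i) = Zp_inf_sum_unit p i" by auto
  have inj: "inj x"
  proof (rule injI)
    fix i j assume "x i = x j"
    then have "Zp_inf_sum_unit p i i = Zp_inf_sum_unit p j i" using hx by metis
    then show "i = j" using p1 by (auto simp: Zp_inf_sum_unit_def split: if_splits)
  qed
  have "ab_independent G (range x)"
    unfolding ab_independent_def
  proof (intro conjI allI impI ballI)
    show "range x \<subseteq> carrier G" using x by auto
    fix F c y
    assume "F \<subseteq> range x \<and> finite F \<and> (\<Otimes>\<^bsub>G\<^esub>y\<in>F. y [^]\<^bsub>G\<^esub> (c y :: int)) = \<one>\<^bsub>G\<^esub>" and y: "y \<in> F"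
    then have "F \<subseteq> range x" "finite F" "(\<Otimes>\<^bsub>G\<^esub>y\<in>F. y [^]\<^bsub>G\<^esub> (c y :: int)) = \<one>\<^bsub>G\<^esub>" by auto
    then show "c y = 0"
      by (intro int_dvd_all_powers_imp_zero[OF p1] unit_lifts_relation_coeff_pow_dvd[OF G tf p1 h x hx inj _ _ _ y])
  qed
  moreover have "infinite (range x)" using range_inj_infinite[OF inj] .
  ultimately show ?thesis unfolding infinite_rank_def by blast
qed

theorem proposition3p5:
  fixes G :: "('a, 'b) monoid_scheme" and p :: nat
  assumes "comm_group G" and "torsion_free G" and "Factorial_Ring.prime p"
  shows "(\<exists>N. N \<lhd> G \<and> G Mod N \<cong> Zp_inf_sum p) \<longleftrightarrow> infinite_rank G"
proof -
  have "group G" "group (Zp_inf_sum p)"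
    using assms(1,3) by (simp_all add: comm_group.axioms(2) group_Zp_inf_sum prime_gt_0_nat)
  then show ?thesis
    using normal_quotient_iso_iff_surj_hom surj_hom_Zp_inf_sum_imp_infinite_rank[OF assms]
      infinite_rank_imp_surj_hom_Zp_inf_sum[OF assms(1,3)] by blast
qed

end
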